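(* Let $(\mathfrak M,\mathscr A)$ be a quasi-differentiable Banach manifold (modelled on $X$) with $C^1$-kernel $\mathfrak M_0$ (modelled on $X_0$) and inner $C^1$-kernel $\mathfrak M_1$, and let $\eta\in\mathfrak M_1$. Then for any two charts $(\mathcal U,\varphi),(\mathcal V,\psi)\in\mathscr A$ with $\eta\in\mathcal U\cap\mathcal V$, $\mathcal T^0_{\eta,\varphi}(\mathfrak M)=\mathcal T^0_{\eta,\psi}(\mathfrak M)$. Consequently, for every chart $(\mathcal U,\varphi)\in\mathscr A$ with $\eta\in\mathcal U$, $\mathcal T^0_\eta(\mathfrak M)=\mathcal T^0_{\eta,\varphi}(\mathfrak M)$ and $\varphi'(\eta)\mathcal T^0_\eta(\mathfrak M)=X_0$.
   Context: Densely embedded spaces and the class $\mathfrak C^k$. For Banach spaces $X$ and $X_0$, $X_0$ is a densely embedded Banach subspace of $X$ if $X_0$ is a dense linear subspace of $X$ and there is $C>0$ with $\|x\|_X\le C\|x\|_{X_0}$ for $x\in X_0$. For such $X_0\subseteq X$, a Banach space $Y$, an open set $U_0\subseteq X_0$ and an integer $k\ge1$, $\mathfrak C^k(U_0;X,Y)$ denotes the set of maps $F:U_0\to Y$ such that (i) for each $x_0\in U_0$ there are bounded symmetric $j$-linear maps $F^{(j)}(x_0):X^j\to Y$, $1\le j\le k$, with $\|F(x)-F(x_0)-\sum_{j=1}^k\frac1{j!}F^{(j)}(x_0)(x-x_0,\dots,x-x_0)\|_Y/\|x-x_0\|_{X_0}^k\to0$ as $\|x-x_0\|_{X_0}\to0$,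 and (ii) $x\mapsto F^{(j)}(x)$ is continuous from $U_0$ (with the $X_0$-topology) into the space $L^j(X,Y)$ of bounded $j$-linear maps. We write $F'=F^{(1)}$. Embedded submanifolds and quasi-differentiable manifolds. Let $\mathfrak M,\mathfrak M_0$ be topological Banach manifolds modelled on $X$, $X_0$, let $\mathscr A$ be a family of local charts of $\mathfrak M$, and $k\ge1$. $\mathfrak M_0$ is a $C^k$-embedded Banach submanifold of $\mathfrak M$ with respect to $\mathscr A$ if: (D1) $X_0$ is a densely embedded Banach subspace of $X$; (D2) $\mathfrak M_0\subseteq\mathfrak M$ and $\mathcal U\cap\mathfrak M_0$ is open in $\mathfrak M_0$ for every open $\mathcal U\subseteq\mathfrak M$; (D3) the domains of the charts of $\mathscr A$ cover $\mathfrak M$; (D4) for $\eta\in\mathfrak M_0$ and $(\mathcal U,\varphi)\in\mathscr A$ with $\eta\in\mathcal U$, $(\mathcal U_0,\varphi|_{\mathcal U_0})$ with $\mathcal U_0:=\mathcal U\cap\mathfrak M_0$ is a local chart of $\mathfrak M_0$; (D5) for $\eta\in\mathfrak M_0$ and $(\mathcal U,\varphi),(\mathcal V,\psi)\in\mathscr A$ with $\eta\in\mathcal U\cap\mathcal V$, $\psi\circ\varphi^{-1}\in\mathfrak C^k(\varphi(\mathcal U_0\cap\mathcal V_0);X,X)$ and $\varphi\circ\psi^{-1}\in\mathfrak C^k(\psi(\mathcal U_0\cap\mathcal V_0);X,X)$. $(\mathfrak M,\mathfrak M_0,\mathscr A)$ is inward spreadable if there is a Banach manifold $\mathfrak M_1\subseteq\mathfrak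 M_0$, modelled on a Banach space $X_1$, which is a $C^1$-embedded Banach submanifold of $\mathfrak M_0$ with respect to the restrictions to $\mathfrak M_0$ of the charts of $\mathscr A$ ($\mathfrak M_1$ an inner $C^1$-kernel); outward spreadable if there is a Banach manifold $\widetilde{\mathfrak M}\supseteq\mathfrak M$ with a chart family $\widetilde{\mathscr A}$ whose restrictions to $\mathfrak M$ form $\mathscr A$ such that $\mathfrak M$ is a $C^1$-embedded Banach submanifold of $\widetilde{\mathfrak M}$. If both hold, $(\mathfrak M,\mathscr A)$ is a quasi-differentiable Banach manifold with $C^1$-kernel $\mathfrak M_0$. Tangent vectors. For $\eta\in\mathfrak M_0$, $\mathcal T_\eta(\mathfrak M)$ is the set of tangent vectors $f'(0)$ (acting on suitable real functions $F$ by $F\mapsto(F\circ f)'(0)$) of curves $f$ through $\eta$ continuously differentiable at $0$ in chart coordinates, and for a chart $\varphi\in\mathscr A$ at $\eta$, $\varphi'(\eta):\mathcal T_\eta(\mathfrak M)\to X$ is the induced linear bijection $f'(0)\mapsto(\varphi\circ\psi^{-1})'(\psi(\eta))(\psi\circ f)'(0)$. For a chart $(\mathcal U,\varphi)\in\mathscr A$ at $\eta$, $\mathcal T^0_{\eta,\varphi}(\mathfrak M)$ is the set of $f'(0)$ for curves $f:(-\varepsilon,\varepsilon)\to\mathfrak M_0$ with $f(0)=\eta$ such that $t\mapsto\varphi(f(t))$ is continuously differentiable on $(-\varepsilon,\varepsilon)$ in the norm of $X_0$; $\mathcal T^0_\eta(\mathfrak M)=\bigcup_{(\mathcal U,\varphi)}\mathcal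 T^0_{\eta,\varphi}(\mathfrak M)$ (union over charts of $\mathscr A$ at $\eta$). *)

theory Defs
  imports "HOL-Analysis.Analysis"
begin

text \<open>Charts are pairs (U, phi) of a domain U and a (total) HOL function phi; only the
  values of phi on U are meaningful.  A smaller Banach space X0 that is densely embedded
  in X is represented by its own type together with the embedding map iota.\<close>

definition dense_embedding :: "('x0::real_normed_vector \<Rightarrow> 'x::real_normed_vector) \<Rightarrow> bool" where
  "dense_embedding \<iota> \<longleftrightarrow> bounded_linear \<iota> \<and> inj \<iota> \<and> closure (range \<iota>) = UNIV"

definition local_chart :: "'m topology \<Rightarrow> 'm set \<Rightarrow> ('m \<Rightarrow> 'x::real_normed_vector) \<Rightarrow> bool" where
  "local_chart M U \<phi> \<longleftrightarrow> openin M U \<and> open (\<phi> ` U) \<and>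
     homeomorphic_map (subtopology M U) (top_of_set (\<phi> ` U)) \<phi>"

definition top_banach_manifold :: "'m topology \<Rightarrow> 'x::banach itself \<Rightarrow> bool" where
  "top_banach_manifold M (t::'x itself) \<longleftrightarrow>
     (\<forall>p\<in>topspace M. \<exists>U (\<phi>::'m \<Rightarrow> 'x). p \<in> U \<and> local_chart M U \<phi>)"

definition frakC1 :: "('x0::real_normed_vector \<Rightarrow> 'x::real_normed_vector) \<Rightarrow> 'x0 set
    \<Rightarrow> ('x0 \<Rightarrow> 'y::real_normed_vector) \<Rightarrow> bool" where
  "frakC1 \<iota> U0 F \<longleftrightarrow> (\<exists>F' :: 'x0 \<Rightarrow> ('x \<Rightarrow>\<^sub>L 'y).
     (\<forall>x0\<in>U0. ((\<lambda>x. (F x - F x0 - blinfun_apply (F' x0) (\<iota> (x - x0))) /\<^sub>R norm (x - x0))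
                  \<longlongrightarrow> 0) (at x0 within U0)) \<and>
     continuous_on U0 F')"

definition C1_embedded_submanifold :: "'m topology \<Rightarrow> 'm topology \<Rightarrow> ('x0::banach \<Rightarrow> 'x::banach)
    \<Rightarrow> ('m set \<times> ('m \<Rightarrow> 'x)) set \<Rightarrow> bool" where
  "C1_embedded_submanifold M M0 \<iota> \<A> \<longleftrightarrow>
     top_banach_manifold M TYPE('x) \<and> top_banach_manifold M0 TYPE('x0) \<and>
     dense_embedding \<iota> \<and>
     topspace M0 \<subseteq> topspace M \<and> (\<forall>U. openin M U \<longrightarrow> openin M0 (U \<inter> topspace M0)) \<and>
     (\<forall>(U,\<phi>)\<in>\<A>. local_chart M U \<phi>) \<and> \<Union> (fst ` \<A>) = topspace M \<and>
     (\<forall>\<eta>\<in>topspace M0. \<forall>(U,\<phi>)\<in>\<A>. \<eta> \<in> U \<longrightarrow>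
        \<phi> ` (U \<inter> topspace M0) \<subseteq> range \<iota> \<and>
        local_chart M0 (U \<inter> topspace M0) (\<lambda>p. inv \<iota> (\<phi> p))) \<and>
     (\<forall>\<eta>\<in>topspace M0. \<forall>(U,\<phi>)\<in>\<A>. \<forall>(V,\<psi>)\<in>\<A>. \<eta> \<in> U \<inter> V \<longrightarrow>
        frakC1 \<iota> ((\<lambda>p. inv \<iota> (\<phi> p)) ` (U \<inter> V \<inter> topspace M0)) (\<lambda>z. \<psi> (inv_into U \<phi> (\<iota> z))) \<and>
        frakC1 \<iota> ((\<lambda>p. inv \<iota> (\<psi> p)) ` (U \<inter> V \<inter> topspace M0)) (\<lambda>z. \<phi> (inv_into V \<psi> (\<iota> z))))"

definition restrict_charts :: "'m topology \<Rightarrow> ('x0 \<Rightarrow> 'x) \<Rightarrow> ('m set \<times> ('m \<Rightarrow> 'x)) set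
    \<Rightarrow> ('m set \<times> ('m \<Rightarrow> 'x0)) set" where
  "restrict_charts S \<iota> \<A> = (\<lambda>(U,\<phi>). (U \<inter> topspace S, \<lambda>p. inv \<iota> (\<phi> p))) ` \<A>"

definition same_chart :: "('m set \<times> ('m \<Rightarrow> 'x)) \<Rightarrow> ('m set \<times> ('m \<Rightarrow> 'x)) \<Rightarrow> bool" where
  "same_chart c d \<longleftrightarrow> fst c = fst d \<and> (\<forall>p\<in>fst c. snd c p = snd d p)"

definition inner_C1_kernel :: "'m topology \<Rightarrow> ('x0::banach \<Rightarrow> 'x::banach)
    \<Rightarrow> ('m set \<times> ('m \<Rightarrow> 'x)) set \<Rightarrow> 'm topology \<Rightarrow> ('x1::banach \<Rightarrow> 'x0) \<Rightarrow> bool" where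
  "inner_C1_kernel M0 \<iota> \<A> M1 \<iota>1 \<longleftrightarrow>
     topspace M1 \<subseteq> topspace M0 \<and> C1_embedded_submanifold M0 M1 \<iota>1 (restrict_charts M0 \<iota> \<A>)"

text \<open>Outward spreadability witnessed by Mt (modelled on 'xt, X embedded via kappa) with
  chart family At whose restrictions to M form A.\<close>
definition outward_extension :: "'m topology \<Rightarrow> ('m set \<times> ('m \<Rightarrow> 'x::banach)) set
    \<Rightarrow> 'm topology \<Rightarrow> ('x \<Rightarrow> 'xt::banach) \<Rightarrow> ('m set \<times> ('m \<Rightarrow> 'xt)) set \<Rightarrow> bool" where
  "outward_extension M \<A> Mt \<kappa> \<A>t \<longleftrightarrow>
     topspace M \<subseteq> topspace Mt \<and> C1_embedded_submanifold Mt M \<kappa> \<A>t \<and>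
     (\<forall>c\<in>\<A>. \<exists>d\<in>restrict_charts M \<kappa> \<A>t. same_chart c d) \<and>
     (\<forall>d\<in>restrict_charts M \<kappa> \<A>t. fst d \<noteq> {} \<longrightarrow> (\<exists>c\<in>\<A>. same_chart c d))"

definition curve0 :: "'m topology \<Rightarrow> ('x0::real_normed_vector \<Rightarrow> 'x) \<Rightarrow> 'm
    \<Rightarrow> ('m set \<times> ('m \<Rightarrow> 'x)) \<Rightarrow> (real \<Rightarrow> 'm) \<Rightarrow> bool" where
  "curve0 M0 \<iota> \<eta> c f \<longleftrightarrow> f 0 = \<eta> \<and>
     (\<exists>\<epsilon>>0. f ` {-\<epsilon><..<\<epsilon>} \<subseteq> fst c \<inter> topspace M0 \<and>
        (\<lambda>t. inv \<iota> (snd c (f t))) C1_differentiable_on {-\<epsilon><..<\<epsilon>})"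

text \<open>Suitable real functions at eta: those of the form G o phi near eta for a chart phi at eta
  and G differentiable at phi(eta).  A tangent vector f'(0) acts on them by F |-> (F o f)'(0).\<close>
definition suitable_fun :: "('m set \<times> ('m \<Rightarrow> 'x::real_normed_vector)) set \<Rightarrow> 'm \<Rightarrow> ('m \<Rightarrow> real) \<Rightarrow> bool" where
  "suitable_fun \<A> \<eta> F \<longleftrightarrow> (\<exists>U \<phi>. (U,\<phi>) \<in> \<A> \<and> \<eta> \<in> U \<and>
     (\<exists>G::'x \<Rightarrow> real. G differentiable (at (\<phi> \<eta>)) \<and> (\<forall>p\<in>U. F p = G (\<phi> p))))"

definition tangent_vec :: "('m set \<times> ('m \<Rightarrow> 'x::real_normed_vector)) set \<Rightarrow> 'm \<Rightarrow> (real \<Rightarrow> 'm)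
    \<Rightarrow> (('m \<Rightarrow> real) \<Rightarrow> real)" where
  "tangent_vec \<A> \<eta> f = (\<lambda>F. if suitable_fun \<A> \<eta> F then deriv (\<lambda>t. F (f t)) 0 else 0)"

definition T0_chart :: "'m topology \<Rightarrow> ('x0::real_normed_vector \<Rightarrow> 'x::real_normed_vector)
    \<Rightarrow> ('m set \<times> ('m \<Rightarrow> 'x)) set \<Rightarrow> 'm \<Rightarrow> ('m set \<times> ('m \<Rightarrow> 'x)) \<Rightarrow> (('m \<Rightarrow> real) \<Rightarrow> real) set" where
  "T0_chart M0 \<iota> \<A> \<eta> c = {tangent_vec \<A> \<eta> f | f. curve0 M0 \<iota> \<eta> c f}"

definition T0 :: "'m topology \<Rightarrow> ('x0::real_normed_vector \<Rightarrow> 'x::real_normed_vector)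
    \<Rightarrow> ('m set \<times> ('m \<Rightarrow> 'x)) set \<Rightarrow> 'm \<Rightarrow> (('m \<Rightarrow> real) \<Rightarrow> real) set" where
  "T0 M0 \<iota> \<A> \<eta> = \<Union> {T0_chart M0 \<iota> \<A> \<eta> c | c. c \<in> \<A> \<and> \<eta> \<in> fst c}"

definition chart_tangent_map :: "('m \<Rightarrow> 'x::real_normed_vector) \<Rightarrow> (real \<Rightarrow> 'm) \<Rightarrow> 'x" where
  "chart_tangent_map \<phi> f = vector_derivative (\<lambda>t. \<phi> (f t)) (at 0)"

definition T0_image :: "'m topology \<Rightarrow> ('x0::real_normed_vector \<Rightarrow> 'x::real_normed_vector)
    \<Rightarrow> ('m set \<times> ('m \<Rightarrow> 'x)) set \<Rightarrow> 'm \<Rightarrow> ('m \<Rightarrow> 'x) \<Rightarrow> 'x set" where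
  "T0_image M0 \<iota> \<A> \<eta> \<phi> =
     {chart_tangent_map \<phi> f | f. \<exists>c\<in>\<A>. \<eta> \<in> fst c \<and> curve0 M0 \<iota> \<eta> c f}"

end

theory Submission
  imports Defs
begin

text \<open>At a point \<open>\<eta>\<close> of the inner kernel, the transition between two charts \<open>\<phi>\<close> and \<open>\<psi>\<close>,
  read in \<open>X\<^sub>1\<close>-coordinates, is \<open>C\<^sup>1\<close> into \<open>X\<^sub>0\<close>, so its derivative is a bounded operator
  \<open>K\<close> on \<open>X\<^sub>0\<close> restricted to \<open>X\<^sub>1\<close>. Differentiating
  \<open>\<theta> \<circ> \<phi>\<^sup>-\<^sup>1 = (\<theta> \<circ> \<psi>\<^sup>-\<^sup>1) \<circ> (\<psi> \<circ> \<phi>\<^sup>-\<^sup>1)\<close> on \<open>X\<^sub>1\<close>-coordinates and using that \<open>X\<^sub>1\<close> is dense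
  in \<open>X\<^sub>0\<close> gives \<open>(\<theta> \<circ> \<phi>\<^sup>-\<^sup>1)' = (\<theta> \<circ> \<psi>\<^sup>-\<^sup>1)' \<circ> K\<close> on all of \<open>X\<^sub>0\<close>, for every chart \<open>\<theta>\<close>.
  Hence a curve that is \<open>C\<^sup>1\<close> in \<open>X\<^sub>0\<close> with velocity \<open>a\<close> in the chart \<open>\<phi>\<close> acts on suitable
  functions exactly like the straight line with velocity \<open>K a\<close> in the chart \<open>\<psi>\<close>. For \<open>\<theta> = \<phi>\<close>
  the transition derivative is \<open>\<iota>\<close> itself, so \<open>\<phi>'(\<eta>)\<close> maps such curves into \<open>\<iota>(X\<^sub>0)\<close>, and
  straight lines attain every value.\<close>

lemma local_chart_inj_on:
  assumes "local_chart M U \<phi>"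
  shows "inj_on \<phi> U"
proof -
  have "openin M U" and hom: "homeomorphic_map (subtopology M U) (top_of_set (\<phi> ` U)) \<phi>"
    using assms unfolding local_chart_def by blast+
  then have "topspace (subtopology M U) = U"
    by (metis openin_subset topspace_subtopology_subset)
  with homeomorphic_imp_injective_map[OF hom] show ?thesis by simp
qed

lemma local_chart_open_image:
  assumes "local_chart M U \<phi>" and "openin M S"
  shows "open (\<phi> ` (U \<inter> S))"
proof -
  have hom: "homeomorphic_map (subtopology M U) (top_of_set (\<phi> ` U)) \<phi>" and "open (\<phi> ` U)"
    using assms(1) unfolding local_chart_def by blast+
  moreover have "openin (subtopology M U) (U \<inter> S)"
    using assms(2) by (rule openin_subtopology_Int2)
  ultimately show ?thesis
    using homeomorphic_imp_open_map[OF hom] openin_open_trans unfolding open_map_def by blast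
qed

lemma bounded_linear_eq_on_dense_range:
  fixes f g :: "'a::real_normed_vector \<Rightarrow> 'b::real_normed_vector"
  assumes "bounded_linear f" "bounded_linear g" "closure (range j) = UNIV"
    and "\<And>x. f (j x) = g (j x)"
  shows "f = g"
proof
  fix v
  have "continuous_on (closure (range j)) (\<lambda>v. f v - g v)"
    using assms(1,2) by (intro continuous_on_diff linear_continuous_on)
  then have "f v - g v = 0"
    by (rule continuous_constant_on_closure) (use assms(3,4) in auto)
  then show "f v = g v" by simp
qed

lemma frakC1_has_derivative:
  assumes "frakC1 \<iota> D F" "open D" "x \<in> D" "bounded_linear \<iota>"
  shows "\<exists>L. (F has_derivative (\<lambda>h. blinfun_apply L (\<iota> h))) (at x)"
proof -
  obtain F' where "((\<lambda>y. (F y - F x - blinfun_apply (F' x) (\<iota> (y - x))) /\<^sub>R norm (y - x))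
                  \<longlongrightarrow> 0) (at x within D)"
    using assms(1,3) unfolding frakC1_def by blast
  moreover have "bounded_linear (\<lambda>h. blinfun_apply (F' x) (\<iota> h))"
    using bounded_linear_compose[OF blinfun.bounded_linear_right assms(4)] .
  ultimately have "(F has_derivative (\<lambda>h. blinfun_apply (F' x) (\<iota> h))) (at x within D)"
    unfolding has_derivative_at_within by simp
  then show ?thesis using at_within_open[OF assms(3,2)] by metis
qed

lemma C1_embedded_submanifoldD:
  assumes "C1_embedded_submanifold M M0 \<iota> \<A>"
  shows "dense_embedding \<iota>"
    and "\<And>S. openin M S \<Longrightarrow> openin M0 (S \<inter> topspace M0)"
    and "\<And>U \<phi>. (U, \<phi>) \<in> \<A> \<Longrightarrow> local_chart M U \<phi>"
    and "\<And>\<eta> U \<phi>. \<lbrakk>\<eta> \<in> topspace M0; (U, \<phi>) \<in> \<A>; \<eta> \<in> U\<rbrakk> \<Longrightarrow>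
           \<phi> ` (U \<inter> topspace M0) \<subseteq> range \<iota>"
    and "\<And>\<eta> U \<phi>. \<lbrakk>\<eta> \<in> topspace M0; (U, \<phi>) \<in> \<A>; \<eta> \<in> U\<rbrakk> \<Longrightarrow>
           local_chart M0 (U \<inter> topspace M0) (\<lambda>p. inv \<iota> (\<phi> p))"
    and "\<And>\<eta> U \<phi> V \<psi>. \<lbrakk>\<eta> \<in> topspace M0; (U, \<phi>) \<in> \<A>; \<eta> \<in> U; (V, \<psi>) \<in> \<A>; \<eta> \<in> V\<rbrakk> \<Longrightarrow>
           frakC1 \<iota> ((\<lambda>p. inv \<iota> (\<phi> p)) ` (U \<inter> V \<inter> topspace M0)) (\<lambda>z. \<psi> (inv_into U \<phi> (\<iota> z)))"
proof -
  note def = assms[unfolded C1_embedded_submanifold_def]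
  have emb: "dense_embedding \<iota>" using def by (elim conjE)
  have opn: "\<forall>S. openin M S \<longrightarrow> openin M0 (S \<inter> topspace M0)"
    using def by (elim conjE)
  have charts: "\<forall>(U, \<phi>)\<in>\<A>. local_chart M U \<phi>" using def by (elim conjE)
  have D4: "\<forall>\<eta>\<in>topspace M0. \<forall>(U, \<phi>)\<in>\<A>. \<eta> \<in> U \<longrightarrow>
      \<phi> ` (U \<inter> topspace M0) \<subseteq> range \<iota> \<and> local_chart M0 (U \<inter> topspace M0) (\<lambda>p. inv \<iota> (\<phi> p))"
    using def by (elim conjE)
  have D5: "\<forall>\<eta>\<in>topspace M0. \<forall>(U, \<phi>)\<in>\<A>. \<forall>(V, \<psi>)\<in>\<A>. \<eta> \<in> U \<inter> V \<longrightarrow>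
      frakC1 \<iota> ((\<lambda>p. inv \<iota> (\<phi> p)) ` (U \<inter> V \<inter> topspace M0)) (\<lambda>z. \<psi> (inv_into U \<phi> (\<iota> z))) \<and>
      frakC1 \<iota> ((\<lambda>p. inv \<iota> (\<psi> p)) ` (U \<inter> V \<inter> topspace M0)) (\<lambda>z. \<phi> (inv_into V \<psi> (\<iota> z)))"
    using def by (elim conjE)
  show "dense_embedding \<iota>" by (rule emb)
  show "\<And>S. openin M S \<Longrightarrow> openin M0 (S \<inter> topspace M0)" using opn by blast
  show "\<And>U \<phi>. (U, \<phi>) \<in> \<A> \<Longrightarrow> local_chart M U \<phi>" using charts by fast
  fix \<eta> U \<phi> assume \<eta>: "\<eta> \<in> topspace M0" and U: "(U, \<phi>) \<in> \<A>" "\<eta> \<in> U"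
  from bspec[OF bspec[OF D4 \<eta>] U(1)] U(2)
  show "\<phi> ` (U \<inter> topspace M0) \<subseteq> range \<iota>"
    and "local_chart M0 (U \<inter> topspace M0) (\<lambda>p. inv \<iota> (\<phi> p))" by simp_all
  fix V \<psi> assume V: "(V, \<psi>) \<in> \<A>" "\<eta> \<in> V"
  from bspec[OF bspec[OF D5 \<eta>] U(1)] have "\<forall>(V, \<psi>)\<in>\<A>. \<eta> \<in> U \<inter> V \<longrightarrow>
      frakC1 \<iota> ((\<lambda>p. inv \<iota> (\<phi> p)) ` (U \<inter> V \<inter> topspace M0)) (\<lambda>z. \<psi> (inv_into U \<phi> (\<iota> z)))"
    by (auto simp: case_prod_beta)
  from bspec[OF this V(1)] U(2) V(2)
  show "frakC1 \<iota> ((\<lambda>p. inv \<iota> (\<phi> p)) ` (U \<inter> V \<inter> topspace M0)) (\<lambda>z. \<psi> (inv_into U \<phi> (\<iota> z)))"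
    by simp
qed

lemma inv_into_chart_embedded:
  assumes "inj_on \<phi> U" "\<phi> ` (U \<inter> S) \<subseteq> range \<iota>" "p \<in> U" "p \<in> S"
  shows "\<iota> (inv \<iota> (\<phi> p)) = \<phi> p" and "inv_into U \<phi> (\<iota> (inv \<iota> (\<phi> p))) = p"
proof -
  show *: "\<iota> (inv \<iota> (\<phi> p)) = \<phi> p"
    using assms(2-4) by (blast intro: f_inv_into_f)
  show "inv_into U \<phi> (\<iota> (inv \<iota> (\<phi> p))) = p"
    unfolding * using assms(1,3) by (rule inv_into_f_f)
qed

lemma C1_embedded_chart_facts:
  assumes K: "C1_embedded_submanifold M M0 \<iota> \<A>"
    and U: "(U, \<phi>) \<in> \<A>" "\<eta> \<in> U" and \<eta>: "\<eta> \<in> topspace M0"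
  shows "inj_on \<phi> U" and "inj_on (\<lambda>p. inv \<iota> (\<phi> p)) (U \<inter> topspace M0)"
    and "\<And>S. openin M S \<Longrightarrow> open ((\<lambda>p. inv \<iota> (\<phi> p)) ` (U \<inter> S \<inter> topspace M0))"
    and "\<And>V \<psi>. (V, \<psi>) \<in> \<A> \<Longrightarrow> open ((\<lambda>p. inv \<iota> (\<phi> p)) ` (U \<inter> V \<inter> topspace M0))"
proof -
  note D = C1_embedded_submanifoldD[OF K]
  show "inj_on \<phi> U" using local_chart_inj_on[OF D(3)[OF U(1)]] .
  have chart0: "local_chart M0 (U \<inter> topspace M0) (\<lambda>p. inv \<iota> (\<phi> p))"
    using D(5)[OF \<eta> U] .
  then show "inj_on (\<lambda>p. inv \<iota> (\<phi> p)) (U \<inter> topspace M0)" by (rule local_chart_inj_on)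
  show *: "open ((\<lambda>p. inv \<iota> (\<phi> p)) ` (U \<inter> S \<inter> topspace M0))" if "openin M S" for S
  proof -
    have "open ((\<lambda>p. inv \<iota> (\<phi> p)) ` (U \<inter> topspace M0 \<inter> (S \<inter> topspace M0)))"
      using local_chart_open_image[OF chart0 D(2)[OF that]] .
    moreover have "U \<inter> topspace M0 \<inter> (S \<inter> topspace M0) = U \<inter> S \<inter> topspace M0" by blast
    ultimately show ?thesis by simp
  qed
  show "open ((\<lambda>p. inv \<iota> (\<phi> p)) ` (U \<inter> V \<inter> topspace M0))" if "(V, \<psi>) \<in> \<A>" for V \<psi>
    using *[of V] D(3)[OF that] by (simp add: local_chart_def)
qed

lemma C1_embedded_transition_has_derivative:
  assumes K: "C1_embedded_submanifold M M0 \<iota> \<A>" and \<eta>: "\<eta> \<in> topspace M0"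
    and U: "(U, \<phi>) \<in> \<A>" "\<eta> \<in> U" and V: "(V, \<psi>) \<in> \<A>" "\<eta> \<in> V"
  shows "\<exists>L. ((\<lambda>z. \<psi> (inv_into U \<phi> (\<iota> z))) has_derivative (\<lambda>h. blinfun_apply L (\<iota> h)))
               (at (inv \<iota> (\<phi> \<eta>)))"
proof (rule frakC1_has_derivative)
  note D = C1_embedded_submanifoldD[OF K]
  show "frakC1 \<iota> ((\<lambda>p. inv \<iota> (\<phi> p)) ` (U \<inter> V \<inter> topspace M0)) (\<lambda>z. \<psi> (inv_into U \<phi> (\<iota> z)))"
    using D(6)[OF \<eta> U V] .
  show "open ((\<lambda>p. inv \<iota> (\<phi> p)) ` (U \<inter> V \<inter> topspace M0))"
    using C1_embedded_chart_facts(4)[OF K U \<eta> V(1)] .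
  show "inv \<iota> (\<phi> \<eta>) \<in> (\<lambda>p. inv \<iota> (\<phi> p)) ` (U \<inter> V \<inter> topspace M0)"
    using U V \<eta> by blast
  show "bounded_linear \<iota>" using D(1) by (simp add: dense_embedding_def)
qed

lemma restrict_charts_memI:
  "(U, \<phi>) \<in> \<A> \<Longrightarrow> (U \<inter> topspace M0, \<lambda>p. inv \<iota> (\<phi> p)) \<in> restrict_charts M0 \<iota> \<A>"
  unfolding restrict_charts_def by (force intro: rev_image_eqI)

lemma curve0_has_vector_derivative:
  assumes "curve0 M0 \<iota> \<eta> (U, \<phi>) f"
  obtains a where "((\<lambda>t. inv \<iota> (\<phi> (f t))) has_vector_derivative a) (at 0)"
proof -
  obtain \<epsilon> D where "\<epsilon> > 0"
    and "\<forall>t\<in>{-\<epsilon><..<\<epsilon>}. ((\<lambda>t. inv \<iota> (\<phi> (f t))) has_vector_derivative D t) (at t)"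
    using assms unfolding curve0_def C1_differentiable_on_def by auto
  moreover have "0 \<in> {-\<epsilon><..<\<epsilon>}" using \<open>\<epsilon> > 0\<close> by simp
  ultimately show thesis using that by blast
qed

lemma has_vector_derivative_compose_has_derivative:
  assumes "(f has_vector_derivative a) (at x)" and "(g has_derivative g') (at (f x))"
  shows "((\<lambda>t. g (f t)) has_vector_derivative g' a) (at x)"
  using vector_derivative_diff_chain_within[of f a x UNIV g g'] assms
  by (simp add: has_derivative_at_withinI o_def)

lemma deriv_compose_eventually_eq:
  fixes G :: "'x::real_normed_vector \<Rightarrow> real"
  assumes "((\<lambda>t. \<theta> (f t)) has_vector_derivative w) (at 0)"
    and "G differentiable (at (\<theta> (f 0)))"
    and "\<delta> > 0" "\<And>t. \<bar>t\<bar> < \<delta> \<Longrightarrow> F (f t) = G (\<theta> (f t))"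
  shows "deriv (\<lambda>t. F (f t)) 0 = frechet_derivative G (at (\<theta> (f 0))) w"
proof -
  have "((\<lambda>t. G (\<theta> (f t))) has_vector_derivative frechet_derivative G (at (\<theta> (f 0))) w) (at 0)"
    using has_vector_derivative_compose_has_derivative[OF assms(1)] assms(2)
    by (simp add: frechet_derivative_works)
  then have "((\<lambda>t. F (f t)) has_vector_derivative frechet_derivative G (at (\<theta> (f 0))) w) (at 0)"
    by (rule has_vector_derivative_transform_within_open[where S="ball 0 \<delta>"])
       (use assms(3,4) in auto)
  then show ?thesis
    by (intro DERIV_imp_deriv) (simp add: has_real_derivative_iff_has_vector_derivative)
qed

lemma has_derivative_factor_dense_unique:
  assumes A: "(A has_derivative A') (at (j u))"
    and j: "bounded_linear j" "closure (range j) = UNIV"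
    and S: "(S has_derivative (\<lambda>h. K (j h))) (at u)" and K: "bounded_linear K"
    and B: "(B has_derivative B') (at (S u))"
    and N: "open N" "u \<in> N" "\<And>v. v \<in> N \<Longrightarrow> A (j v) = B (S v)"
  shows "A' = B' \<circ> K"
proof (rule bounded_linear_eq_on_dense_range[OF _ _ j(2)])
  show "bounded_linear A'" using A by (rule has_derivative_bounded_linear)
  show "bounded_linear (B' \<circ> K)"
    using bounded_linear_compose[OF has_derivative_bounded_linear[OF B] K] by (simp add: o_def)
  have "((A \<circ> j) has_derivative A' \<circ> j) (at u)"
    using diff_chain_at[OF bounded_linear_imp_has_derivative[OF j(1)] A] .
  moreover have "((A \<circ> j) has_derivative B' \<circ> (\<lambda>h. K (j h))) (at u)"
    using diff_chain_at[OF S B]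
    by (rule has_derivative_transform_within_open[OF _ N(1,2)]) (simp add: N(3))
  ultimately have "A' \<circ> j = B' \<circ> (\<lambda>h. K (j h))" by (rule has_derivative_unique)
  then show "A' (j x) = (B' \<circ> K) (j x)" for x by (simp add: fun_eq_iff)
qed

definition transition_deriv :: "('x0::real_normed_vector \<Rightarrow> 'x::real_normed_vector) \<Rightarrow> 'm
    \<Rightarrow> 'm set \<Rightarrow> ('m \<Rightarrow> 'x) \<Rightarrow> ('m \<Rightarrow> 'y::real_normed_vector) \<Rightarrow> 'x0 \<Rightarrow> 'y" where
  "transition_deriv \<iota> \<eta> U \<phi> \<theta> = frechet_derivative (\<lambda>z. \<theta> (inv_into U \<phi> (\<iota> z))) (at (inv \<iota> (\<phi> \<eta>)))"

context
  fixes M M0 :: "'m topology" and \<iota> :: "'x0::banach \<Rightarrow> 'x::banach"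
    and \<A> :: "('m set \<times> ('m \<Rightarrow> 'x)) set" and \<eta> :: 'm
  assumes kernel: "C1_embedded_submanifold M M0 \<iota> \<A>" and \<eta>0: "\<eta> \<in> topspace M0"
begin

lemma has_derivative_transition_deriv:
  assumes "(U, \<phi>) \<in> \<A>" "\<eta> \<in> U" and "(W, \<theta>) \<in> \<A>" "\<eta> \<in> W"
  shows "((\<lambda>z. \<theta> (inv_into U \<phi> (\<iota> z))) has_derivative transition_deriv \<iota> \<eta> U \<phi> \<theta>)
           (at (inv \<iota> (\<phi> \<eta>)))"
  using C1_embedded_transition_has_derivative[OF kernel \<eta>0 assms]
  unfolding transition_deriv_def by (metis differentiable_def frechet_derivative_works)

lemma transition_deriv_self:
  assumes U: "(U, \<phi>) \<in> \<A>" "\<eta> \<in> U"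
  shows "transition_deriv \<iota> \<eta> U \<phi> \<phi> = \<iota>"
proof -
  note D = C1_embedded_submanifoldD[OF kernel]
  let ?O = "(\<lambda>p. inv \<iota> (\<phi> p)) ` (U \<inter> U \<inter> topspace M0)"
  have "(\<iota> has_derivative \<iota>) (at (inv \<iota> (\<phi> \<eta>)))"
    using D(1) by (simp add: dense_embedding_def bounded_linear_imp_has_derivative)
  moreover have "open ?O" using C1_embedded_chart_facts(4)[OF kernel U \<eta>0 U(1)] .
  moreover have "inv \<iota> (\<phi> \<eta>) \<in> ?O" using U \<eta>0 by blast
  moreover have "\<iota> z = \<phi> (inv_into U \<phi> (\<iota> z))" if "z \<in> ?O" for z
    using that inv_into_chart_embedded[OF C1_embedded_chart_facts(1)[OF kernel U \<eta>0] D(4)[OF \<eta>0 U]]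
    by auto
  ultimately have "((\<lambda>z. \<phi> (inv_into U \<phi> (\<iota> z))) has_derivative \<iota>) (at (inv \<iota> (\<phi> \<eta>)))"
    by (rule has_derivative_transform_within_open)
  with has_derivative_transition_deriv[OF U U] show ?thesis
    using has_derivative_unique by blast
qed

lemma curve0_transition_has_vector_derivative:
  assumes U: "(U, \<phi>) \<in> \<A>" "\<eta> \<in> U" and f: "curve0 M0 \<iota> \<eta> (U, \<phi>) f"
    and a: "((\<lambda>t. inv \<iota> (\<phi> (f t))) has_vector_derivative a) (at 0)"
    and W: "(W, \<theta>) \<in> \<A>" "\<eta> \<in> W"
  obtains \<delta> where "\<delta> > 0" "\<And>t. \<bar>t\<bar> < \<delta> \<Longrightarrow> f t \<in> W"
    and "((\<lambda>t. \<theta> (f t)) has_vector_derivative transition_deriv \<iota> \<eta> U \<phi> \<theta> a) (at 0)"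
proof -
  let ?z = "\<lambda>t. inv \<iota> (\<phi> (f t))" and ?O = "(\<lambda>p. inv \<iota> (\<phi> p)) ` (U \<inter> W \<inter> topspace M0)"
  obtain \<epsilon> where f0: "f 0 = \<eta>" and "\<epsilon> > 0" and f\<epsilon>: "f ` {-\<epsilon><..<\<epsilon>} \<subseteq> U \<inter> topspace M0"
    using f unfolding curve0_def by auto
  have "?z 0 \<in> ?O" using f0 U W \<eta>0 by blast
  then obtain r where "r > 0" and r: "ball (?z 0) r \<subseteq> ?O"
    using C1_embedded_chart_facts(4)[OF kernel U \<eta>0 W(1)] open_contains_ball by blast
  obtain d where "d > 0" and d: "\<And>t. dist t 0 < d \<Longrightarrow> dist (?z t) (?z 0) < r"
    using has_vector_derivative_continuous[OF a] \<open>r > 0\<close> unfolding continuous_at_eps_delta by blast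
  define \<delta> where "\<delta> = min d \<epsilon>"
  have near: "f t \<in> W \<and> \<theta> (f t) = \<theta> (inv_into U \<phi> (\<iota> (?z t)))" if t: "\<bar>t\<bar> < \<delta>" for t
  proof -
    have "t \<in> {-\<epsilon><..<\<epsilon>}" using t by (auto simp: \<delta>_def abs_less_iff)
    then have ft: "f t \<in> U \<inter> topspace M0" using f\<epsilon> by blast
    have "?z t \<in> ?O" using d[of t] r t by (auto simp: \<delta>_def dist_commute)
    then obtain p where p: "p \<in> U" "p \<in> W" "p \<in> topspace M0" and zp: "?z t = inv \<iota> (\<phi> p)"
      by blast
    have "f t = p"
      using inj_onD[OF C1_embedded_chart_facts(2)[OF kernel U \<eta>0] zp] ft p by blast
    then show ?thesis
      using inv_into_chart_embedded(2)[OF C1_embedded_chart_facts(1)[OF kernel U \<eta>0]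
          C1_embedded_submanifoldD(4)[OF kernel \<eta>0 U] p(1,3)] p(2)
      by simp
  qed
  have "((\<lambda>t. \<theta> (inv_into U \<phi> (\<iota> (?z t)))) has_vector_derivative transition_deriv \<iota> \<eta> U \<phi> \<theta> a) (at 0)"
    using has_vector_derivative_compose_has_derivative[OF a] has_derivative_transition_deriv[OF U W] f0
    by simp
  then have "((\<lambda>t. \<theta> (f t)) has_vector_derivative transition_deriv \<iota> \<eta> U \<phi> \<theta> a) (at 0)"
    by (rule has_vector_derivative_transform_within_open[where S="ball 0 \<delta>"])
       (use near \<open>d > 0\<close> \<open>\<epsilon> > 0\<close> in \<open>auto simp: \<delta>_def\<close>)
  moreover have "\<delta> > 0" using \<open>d > 0\<close> \<open>\<epsilon> > 0\<close> by (simp add: \<delta>_def)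
  ultimately show thesis using that near by blast
qed

lemma curve0_with_velocity:
  assumes V: "(V, \<psi>) \<in> \<A>" "\<eta> \<in> V"
  obtains g where "curve0 M0 \<iota> \<eta> (V, \<psi>) g"
    and "((\<lambda>t. inv \<iota> (\<psi> (g t))) has_vector_derivative b) (at 0)"
proof -
  let ?\<psi>0 = "\<lambda>p. inv \<iota> (\<psi> p)"
  have "?\<psi>0 \<eta> \<in> ?\<psi>0 ` (V \<inter> V \<inter> topspace M0)" using V \<eta>0 by blast
  then obtain r where "r > 0" and r: "ball (?\<psi>0 \<eta>) r \<subseteq> ?\<psi>0 ` (V \<inter> V \<inter> topspace M0)"
    using C1_embedded_chart_facts(4)[OF kernel V \<eta>0 V(1)] open_contains_ball by blast
  define \<epsilon> where "\<epsilon> = r / (norm b + 1)"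
  have "\<epsilon> > 0" using \<open>r > 0\<close> by (simp add: \<epsilon>_def add_nonneg_pos)
  define g where "g t = inv_into (V \<inter> topspace M0) ?\<psi>0 (?\<psi>0 \<eta> + t *\<^sub>R b)" for t
  have line: "?\<psi>0 \<eta> + t *\<^sub>R b \<in> ?\<psi>0 ` (V \<inter> topspace M0)" if "t \<in> {-\<epsilon><..<\<epsilon>}" for t
  proof -
    have "\<bar>t\<bar> < r / (norm b + 1)" using that by (auto simp: \<epsilon>_def)
    then have "\<bar>t\<bar> * (norm b + 1) < r"
      by (metis pos_less_divide_eq add_nonneg_pos norm_ge_zero zero_less_one)
    moreover have "norm (t *\<^sub>R b) \<le> \<bar>t\<bar> * (norm b + 1)" by (simp add: mult_left_mono)
    ultimately show ?thesis using r by (auto simp: dist_norm)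
  qed
  have g_in: "g t \<in> V \<inter> topspace M0" and g_line: "?\<psi>0 (g t) = ?\<psi>0 \<eta> + t *\<^sub>R b"
    if "t \<in> {-\<epsilon><..<\<epsilon>}" for t
    unfolding g_def using inv_into_into[OF line[OF that]] f_inv_into_f[OF line[OF that]] by blast+
  have "g 0 = \<eta>"
    using inv_into_f_f[OF C1_embedded_chart_facts(2)[OF kernel V \<eta>0]] V \<eta>0 by (simp add: g_def)
  have velocity: "((\<lambda>t. ?\<psi>0 (g t)) has_vector_derivative b) (at t)" if "t \<in> {-\<epsilon><..<\<epsilon>}" for t
  proof -
    have "((\<lambda>t. ?\<psi>0 \<eta> + t *\<^sub>R b) has_vector_derivative b) (at t)"
      by (auto intro!: derivative_eq_intros)
    then show ?thesis
      by (rule has_vector_derivative_transform_within_open[where S="{-\<epsilon><..<\<epsilon>}"])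
         (use that g_line in auto)
  qed
  have "curve0 M0 \<iota> \<eta> (V, \<psi>) g"
    unfolding curve0_def C1_differentiable_on_def
    using \<open>g 0 = \<eta>\<close> \<open>\<epsilon> > 0\<close> g_in velocity by (auto intro!: exI[of _ \<epsilon>] exI[of _ "\<lambda>_. b"])
  moreover have "((\<lambda>t. ?\<psi>0 (g t)) has_vector_derivative b) (at 0)" using velocity \<open>\<epsilon> > 0\<close> by simp
  ultimately show thesis by (rule that)
qed

lemma tangent_vec_eqI:
  assumes U: "(U, \<phi>) \<in> \<A>" "\<eta> \<in> U" and f: "curve0 M0 \<iota> \<eta> (U, \<phi>) f"
    and a: "((\<lambda>t. inv \<iota> (\<phi> (f t))) has_vector_derivative a) (at 0)"
    and V: "(V, \<psi>) \<in> \<A>" "\<eta> \<in> V" and g: "curve0 M0 \<iota> \<eta> (V, \<psi>) g"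
    and b: "((\<lambda>t. inv \<iota> (\<psi> (g t))) has_vector_derivative b) (at 0)"
    and same: "\<And>W \<theta>. (W, \<theta>) \<in> \<A> \<Longrightarrow> \<eta> \<in> W \<Longrightarrow>
      transition_deriv \<iota> \<eta> U \<phi> \<theta> a = transition_deriv \<iota> \<eta> V \<psi> \<theta> b"
  shows "tangent_vec \<A> \<eta> f = tangent_vec \<A> \<eta> g"
proof
  fix F
  show "tangent_vec \<A> \<eta> f F = tangent_vec \<A> \<eta> g F"
  proof (cases "suitable_fun \<A> \<eta> F")
    case True
    then obtain W \<theta> G where W: "(W, \<theta>) \<in> \<A>" "\<eta> \<in> W" and G: "G differentiable (at (\<theta> \<eta>))"
      and FG: "\<forall>p\<in>W. F p = G (\<theta> p)"
      unfolding suitable_fun_def by blast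
    have "f 0 = \<eta>" "g 0 = \<eta>" using f g by (simp_all add: curve0_def)
    obtain \<delta>f where "\<delta>f > 0" and fW: "\<And>t. \<bar>t\<bar> < \<delta>f \<Longrightarrow> f t \<in> W"
      and df: "((\<lambda>t. \<theta> (f t)) has_vector_derivative transition_deriv \<iota> \<eta> U \<phi> \<theta> a) (at 0)"
      using curve0_transition_has_vector_derivative[OF U f a W] by blast
    obtain \<delta>g where "\<delta>g > 0" and gW: "\<And>t. \<bar>t\<bar> < \<delta>g \<Longrightarrow> g t \<in> W"
      and dg: "((\<lambda>t. \<theta> (g t)) has_vector_derivative transition_deriv \<iota> \<eta> V \<psi> \<theta> b) (at 0)"
      using curve0_transition_has_vector_derivative[OF V g b W] by blast
    have "deriv (\<lambda>t. F (f t)) 0 = frechet_derivative G (at (\<theta> (f 0))) (transition_deriv \<iota> \<eta> U \<phi> \<theta> a)"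
      by (rule deriv_compose_eventually_eq[where \<theta>=\<theta> and f=f, OF df _ \<open>\<delta>f > 0\<close>])
         (use G FG fW \<open>f 0 = \<eta>\<close> in auto)
    moreover have "deriv (\<lambda>t. F (g t)) 0 = frechet_derivative G (at (\<theta> (g 0))) (transition_deriv \<iota> \<eta> V \<psi> \<theta> b)"
      by (rule deriv_compose_eventually_eq[where \<theta>=\<theta> and f=g, OF dg _ \<open>\<delta>g > 0\<close>])
         (use G FG gW \<open>g 0 = \<eta>\<close> in auto)
    ultimately show ?thesis using same[OF W] True \<open>f 0 = \<eta>\<close> \<open>g 0 = \<eta>\<close> by (simp add: tangent_vec_def)
  qed (simp add: tangent_vec_def)
qed

lemma transition_deriv_change_of_chart:
  assumes inward: "inner_C1_kernel M0 \<iota> \<A> M1 \<iota>1" and \<eta>1: "\<eta> \<in> topspace M1"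
    and U: "(U, \<phi>) \<in> \<A>" "\<eta> \<in> U" and V: "(V, \<psi>) \<in> \<A>" "\<eta> \<in> V"
  obtains K :: "'x0 \<Rightarrow>\<^sub>L 'x0" where "\<And>W \<theta>. (W, \<theta>) \<in> \<A> \<Longrightarrow> \<eta> \<in> W \<Longrightarrow>
    transition_deriv \<iota> \<eta> U \<phi> \<theta> = transition_deriv \<iota> \<eta> V \<psi> \<theta> \<circ> blinfun_apply K"
proof -
  let ?\<phi>0 = "\<lambda>p. inv \<iota> (\<phi> p)" and ?\<psi>0 = "\<lambda>p. inv \<iota> (\<psi> p)"
  let ?U0 = "U \<inter> topspace M0" and ?V0 = "V \<inter> topspace M0"
  let ?S = "\<lambda>z. ?\<psi>0 (inv_into ?U0 ?\<phi>0 (\<iota>1 z))" and ?u = "inv \<iota>1 (?\<phi>0 \<eta>)"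
  have inner: "C1_embedded_submanifold M0 M1 \<iota>1 (restrict_charts M0 \<iota> \<A>)"
    using inward by (simp add: inner_C1_kernel_def)
  note D = C1_embedded_submanifoldD[OF kernel] and D1 = C1_embedded_submanifoldD[OF inner]
  have U0: "(?U0, ?\<phi>0) \<in> restrict_charts M0 \<iota> \<A>" "\<eta> \<in> ?U0"
    and V0: "(?V0, ?\<psi>0) \<in> restrict_charts M0 \<iota> \<A>" "\<eta> \<in> ?V0"
    using restrict_charts_memI U V \<eta>0 by auto
  obtain K where S: "(?S has_derivative (\<lambda>h. blinfun_apply K (\<iota>1 h))) (at ?u)"
    using C1_embedded_transition_has_derivative[OF inner \<eta>1 U0 V0] by auto
  have \<iota>1: "bounded_linear \<iota>1" "closure (range \<iota>1) = UNIV"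
    using D1(1) by (simp_all add: dense_embedding_def)
  note inv_U = inv_into_chart_embedded[OF C1_embedded_chart_facts(1)[OF kernel U \<eta>0] D(4)[OF \<eta>0 U]]
  note inv_V = inv_into_chart_embedded[OF C1_embedded_chart_facts(1)[OF kernel V \<eta>0] D(4)[OF \<eta>0 V]]
  note inv_U0 = inv_into_chart_embedded(1)[OF C1_embedded_chart_facts(1)[OF inner U0 \<eta>1] D1(4)[OF \<eta>1 U0]]
  note inj_U0 = C1_embedded_chart_facts(2)[OF kernel U \<eta>0]
  have "transition_deriv \<iota> \<eta> U \<phi> \<theta> = transition_deriv \<iota> \<eta> V \<psi> \<theta> \<circ> blinfun_apply K"
    if W: "(W, \<theta>) \<in> \<A>" "\<eta> \<in> W" for W \<theta>
  proof -
    let ?N = "(\<lambda>p. inv \<iota>1 (?\<phi>0 p)) ` (?U0 \<inter> ((V \<inter> W) \<inter> topspace M0) \<inter> topspace M1)"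
    have "openin M (V \<inter> W)" using D(3)[OF V(1)] D(3)[OF W(1)] by (simp add: local_chart_def openin_Int)
    then have N: "open ?N" using C1_embedded_chart_facts(3)[OF inner U0 \<eta>1 D(2)] by simp
    have u: "?u \<in> ?N" by (rule image_eqI[of _ _ \<eta>]) (use U V W \<eta>0 \<eta>1 in auto)
    have local_eq: "\<theta> (inv_into U \<phi> (\<iota> (\<iota>1 v))) = \<theta> (inv_into V \<psi> (\<iota> (?S v)))" if "v \<in> ?N" for v
    proof -
      obtain p where p: "p \<in> U" "p \<in> V" "p \<in> topspace M0" "p \<in> topspace M1" and v: "v = inv \<iota>1 (?\<phi>0 p)"
        using \<open>v \<in> ?N\<close> by blast
      have "\<iota>1 v = ?\<phi>0 p" using inv_U0[of p] p v by simp
      then show ?thesis using inv_U(2)[OF p(1,3)] inv_V(2)[OF p(2,3)] inv_into_f_f[OF inj_U0] p by simp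
    qed
    have "\<iota>1 ?u = ?\<phi>0 \<eta>" and "?S ?u = ?\<psi>0 \<eta>"
      using inv_U0[OF U0(2) \<eta>1] inv_into_f_f[OF inj_U0 U0(2)] by simp_all
    then have TU: "((\<lambda>z. \<theta> (inv_into U \<phi> (\<iota> z))) has_derivative transition_deriv \<iota> \<eta> U \<phi> \<theta>) (at (\<iota>1 ?u))"
      and TV: "((\<lambda>z. \<theta> (inv_into V \<psi> (\<iota> z))) has_derivative transition_deriv \<iota> \<eta> V \<psi> \<theta>) (at (?S ?u))"
      using has_derivative_transition_deriv[OF U W] has_derivative_transition_deriv[OF V W] by simp_all
    show ?thesis
      using has_derivative_factor_dense_unique[OF TU \<iota>1 S blinfun.bounded_linear_right TV N u local_eq] .
  qed
  then show thesis by (rule that)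
qed

lemma T0_chart_subset:
  assumes inward: "inner_C1_kernel M0 \<iota> \<A> M1 \<iota>1" and \<eta>1: "\<eta> \<in> topspace M1"
    and U: "(U, \<phi>) \<in> \<A>" "\<eta> \<in> U" and V: "(V, \<psi>) \<in> \<A>" "\<eta> \<in> V"
  shows "T0_chart M0 \<iota> \<A> \<eta> (U, \<phi>) \<subseteq> T0_chart M0 \<iota> \<A> \<eta> (V, \<psi>)"
proof
  fix v assume "v \<in> T0_chart M0 \<iota> \<A> \<eta> (U, \<phi>)"
  then obtain f where v: "v = tangent_vec \<A> \<eta> f" and f: "curve0 M0 \<iota> \<eta> (U, \<phi>) f"
    unfolding T0_chart_def by blast
  obtain a where a: "((\<lambda>t. inv \<iota> (\<phi> (f t))) has_vector_derivative a) (at 0)"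
    using curve0_has_vector_derivative[OF f] .
  obtain K where K: "\<And>W \<theta>. (W, \<theta>) \<in> \<A> \<Longrightarrow> \<eta> \<in> W \<Longrightarrow>
      transition_deriv \<iota> \<eta> U \<phi> \<theta> = transition_deriv \<iota> \<eta> V \<psi> \<theta> \<circ> blinfun_apply K"
    using transition_deriv_change_of_chart[OF inward \<eta>1 U V] by blast
  obtain g where g: "curve0 M0 \<iota> \<eta> (V, \<psi>) g"
    and b: "((\<lambda>t. inv \<iota> (\<psi> (g t))) has_vector_derivative blinfun_apply K a) (at 0)"
    using curve0_with_velocity[OF V] .
  have "v = tangent_vec \<A> \<eta> g"
    unfolding v using tangent_vec_eqI[OF U f a V g b] K by simp
  then show "v \<in> T0_chart M0 \<iota> \<A> \<eta> (V, \<psi>)"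
    unfolding T0_chart_def using g by blast
qed

lemma T0_image_eq_range:
  assumes inward: "inner_C1_kernel M0 \<iota> \<A> M1 \<iota>1" and \<eta>1: "\<eta> \<in> topspace M1"
    and U: "(U, \<phi>) \<in> \<A>" "\<eta> \<in> U"
  shows "T0_image M0 \<iota> \<A> \<eta> \<phi> = range \<iota>"
proof (intro equalityI subsetI)
  fix y assume "y \<in> T0_image M0 \<iota> \<A> \<eta> \<phi>"
  then obtain f W \<theta> where y: "y = chart_tangent_map \<phi> f" and W: "(W, \<theta>) \<in> \<A>" "\<eta> \<in> W"
    and f: "curve0 M0 \<iota> \<eta> (W, \<theta>) f"
    unfolding T0_image_def by auto
  obtain a where a: "((\<lambda>t. inv \<iota> (\<theta> (f t))) has_vector_derivative a) (at 0)"
    using curve0_has_vector_derivative[OF f] .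
  obtain K where K: "\<And>W' \<theta>'. (W', \<theta>') \<in> \<A> \<Longrightarrow> \<eta> \<in> W' \<Longrightarrow>
      transition_deriv \<iota> \<eta> W \<theta> \<theta>' = transition_deriv \<iota> \<eta> U \<phi> \<theta>' \<circ> blinfun_apply K"
    using transition_deriv_change_of_chart[OF inward \<eta>1 W U] by blast
  have "((\<lambda>t. \<phi> (f t)) has_vector_derivative transition_deriv \<iota> \<eta> W \<theta> \<phi> a) (at 0)"
    using curve0_transition_has_vector_derivative[OF W f a U] by blast
  then have "y = transition_deriv \<iota> \<eta> W \<theta> \<phi> a"
    unfolding y chart_tangent_map_def by (rule vector_derivative_at)
  also have "\<dots> = \<iota> (blinfun_apply K a)"
    using K[OF U] transition_deriv_self[OF U] by simp
  finally show "y \<in> range \<iota>" by blast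
next
  fix y assume "y \<in> range \<iota>"
  then obtain b where y: "y = \<iota> b" by blast
  obtain g where g: "curve0 M0 \<iota> \<eta> (U, \<phi>) g"
    and b: "((\<lambda>t. inv \<iota> (\<phi> (g t))) has_vector_derivative b) (at 0)"
    using curve0_with_velocity[OF U] .
  have "((\<lambda>t. \<phi> (g t)) has_vector_derivative transition_deriv \<iota> \<eta> U \<phi> \<phi> b) (at 0)"
    using curve0_transition_has_vector_derivative[OF U g b U] by blast
  then have "chart_tangent_map \<phi> g = y"
    unfolding chart_tangent_map_def y transition_deriv_self[OF U] by (rule vector_derivative_at)
  moreover have "\<exists>c\<in>\<A>. \<eta> \<in> fst c \<and> curve0 M0 \<iota> \<eta> c g"
    using g U by (intro bexI[of _ "(U, \<phi>)"]) auto
  ultimately show "y \<in> T0_image M0 \<iota> \<A> \<eta> \<phi>"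
    unfolding T0_image_def by blast
qed

end

theorem lemma3p7:
  fixes M M0 M1 Mt :: "'m topology"
    and \<iota> :: "'x0::banach \<Rightarrow> 'x::banach"
    and \<iota>1 :: "'x1::banach \<Rightarrow> 'x0"
    and \<kappa> :: "'x \<Rightarrow> 'xt::banach"
    and \<A> :: "('m set \<times> ('m \<Rightarrow> 'x)) set"
    and \<A>t :: "('m set \<times> ('m \<Rightarrow> 'xt)) set"
    and \<eta> :: 'm and U V :: "'m set" and \<phi> \<psi> :: "'m \<Rightarrow> 'x"
  assumes kernel: "C1_embedded_submanifold M M0 \<iota> \<A>"
    and inward: "inner_C1_kernel M0 \<iota> \<A> M1 \<iota>1"
    and outward: "outward_extension M \<A> Mt \<kappa> \<A>t"
    and eta: "\<eta> \<in> topspace M1"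
    and U: "(U, \<phi>) \<in> \<A>" "\<eta> \<in> U"
    and V: "(V, \<psi>) \<in> \<A>" "\<eta> \<in> V"
  shows "T0_chart M0 \<iota> \<A> \<eta> (U, \<phi>) = T0_chart M0 \<iota> \<A> \<eta> (V, \<psi>) \<and>
         T0 M0 \<iota> \<A> \<eta> = T0_chart M0 \<iota> \<A> \<eta> (U, \<phi>) \<and>
         T0_image M0 \<iota> \<A> \<eta> \<phi> = range \<iota>"
proof -
  have \<eta>0: "\<eta> \<in> topspace M0" using eta inward by (auto simp: inner_C1_kernel_def)
  note subset = T0_chart_subset[OF kernel \<eta>0 inward eta]
  have same: "T0_chart M0 \<iota> \<A> \<eta> c = T0_chart M0 \<iota> \<A> \<eta> (U, \<phi>)" if "c \<in> \<A>" "\<eta> \<in> fst c" for c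
  proof -
    obtain W \<theta> where c: "c = (W, \<theta>)" by (cases c)
    show ?thesis using subset[OF _ _ U, of W \<theta>] subset[OF U, of W \<theta>] that unfolding c by auto
  qed
  have "T0 M0 \<iota> \<A> \<eta> = T0_chart M0 \<iota> \<A> \<eta> (U, \<phi>)"
  proof
    show "T0 M0 \<iota> \<A> \<eta> \<subseteq> T0_chart M0 \<iota> \<A> \<eta> (U, \<phi>)" unfolding T0_def using same by blast
    show "T0_chart M0 \<iota> \<A> \<eta> (U, \<phi>) \<subseteq> T0 M0 \<iota> \<A> \<eta>" unfolding T0_def using U by fastforce
  qed
  then show ?thesis
    using same[OF V(1)] V(2) T0_image_eq_range[OF kernel \<eta>0 inward eta U] by simp
qed

end
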